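(* Let $R=k[x_1,\ldots,x_m]$ be a polynomial ring over a field $k$ with graded maximal ideal $\mathfrak m=(x_1,\ldots,x_m)$, and let $I_1,I_2$ be non-zero proper monomial ideals of $R$ such that $\partial^*(I_1)\subseteq I_2$. Then $I_1\subseteq \mathfrak m I_2$, and there exists a map $\phi:\mathcal G(I_1)\to\mathcal G(I_2)$ such that for every non-empty subset $G'\subseteq \mathcal G(I_1)$, the monomial $\operatorname{lcm} G'$ belongs to the ideal $(\operatorname{lcm}\phi(G'))\mathfrak m$.
   Context: For a monomial ideal $L$, $\mathcal G(L)$ is its set of minimal monomial generators, and $\partial^*(L)$ is the ideal generated by all monomials $f/x_i$, where $f\in\mathcal G(L)$ and $x_i$ is a variable dividing $f$. For a set $G'$ of monomials, $\operatorname{lcm}G'$ is the least common multiple of its elements. *)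

theory Defs
  imports Main
begin

text \<open>Monomials of k[x_v : v in 'v] ('v a finite type of variables, m = CARD('v)) are
exponent vectors 'v => nat.
A monomial ideal of R is determined by (and identified with) the set of monomials it contains;
such a set is exactly a set closed under multiplication by monomials (upward closed).\<close>

type_synonym 'v monomial = "'v \<Rightarrow> nat"

definition mdvd :: "'v monomial \<Rightarrow> 'v monomial \<Rightarrow> bool" where
  "mdvd a b \<longleftrightarrow> (\<forall>i. a i \<le> b i)"

definition mmult :: "'v monomial \<Rightarrow> 'v monomial \<Rightarrow> 'v monomial" where
  "mmult a b = (\<lambda>i. a i + b i)"

definition one_mon :: "'v monomial" where
  "one_mon = (\<lambda>i. 0)"

definition var_mon :: "'v \<Rightarrow> 'v monomial" where
  "var_mon i = (\<lambda>j. if j = i then 1 else 0)"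

definition monomial_ideal :: "'v monomial set \<Rightarrow> bool" where
  "monomial_ideal I \<longleftrightarrow> (\<forall>a\<in>I. \<forall>b. mdvd a b \<longrightarrow> b \<in> I)"

definition gen_ideal :: "'v monomial set \<Rightarrow> 'v monomial set" where
  "gen_ideal S = {u. \<exists>s\<in>S. mdvd s u}"

definition mingens :: "'v monomial set \<Rightarrow> 'v monomial set" where
  "mingens L = {f\<in>L. \<forall>g\<in>L. mdvd g f \<longrightarrow> g = f}"

definition dstar :: "'v monomial set \<Rightarrow> 'v monomial set" where
  "dstar L = gen_ideal {g. \<exists>f\<in>mingens L. \<exists>i. mdvd (var_mon i) f \<and> mmult g (var_mon i) = f}"

definition max_times :: "'v monomial set \<Rightarrow> 'v monomial set" where
  "max_times L = gen_ideal {mmult g (var_mon i) | g i. g \<in> L}"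

definition mlcm :: "'v monomial set \<Rightarrow> 'v monomial" where
  "mlcm S = (\<lambda>i. Max ((\<lambda>f. f i) ` S))"

end

theory Submission
  imports Defs "HOL.Topological_Spaces"
begin

text \<open>Fix a linear order of the variables. A minimal generator \<open>f\<close> of \<open>I\<^sub>1\<close> is divisible
by its largest variable \<open>x\<^sub>j\<close>, and \<open>f/x\<^sub>j \<in> \<partial>*(I\<^sub>1) \<subseteq> I\<^sub>2\<close> is divisible by a minimal generator
\<open>\<phi>(f)\<close> of \<open>I\<^sub>2\<close>; in particular \<open>I\<^sub>1 \<subseteq> \<^bold>m I\<^sub>2\<close>. Given \<open>G'\<close>, let \<open>x\<^sub>j\<close> be the largest variable
dividing \<open>lcm G'\<close>. A generator \<open>f \<in> G'\<close> either has a smaller \<open>x\<^sub>j\<close>-exponent than \<open>lcm G'\<close>, or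
attains it, and then \<open>x\<^sub>j\<close> is also the largest variable of \<open>f\<close>, so that \<open>\<phi>(f) x\<^sub>j\<close> divides \<open>f\<close>.
Either way \<open>\<phi>(f) x\<^sub>j\<close> divides \<open>lcm G'\<close>, hence so does \<open>lcm \<phi>(G') x\<^sub>j\<close>. The lcm is
well defined because \<open>\<G>(I\<^sub>1)\<close> is finite by Dickson's lemma.\<close>

lemma mdvd_iff_le: "mdvd a b \<longleftrightarrow> a \<le> b"
  by (simp add: mdvd_def le_fun_def)

lemma mmult_var_mon_apply: "mmult g (var_mon i) j = g j + (if j = i then 1 else 0)"
  by (simp add: mmult_def var_mon_def)

lemma mem_max_times_iff: "u \<in> max_times L \<longleftrightarrow> (\<exists>g\<in>L. \<exists>i. mdvd (mmult g (var_mon i)) u)"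
  by (auto simp: max_times_def gen_ideal_def)

lemma ex_pos_if_ne_one_mon: "g \<noteq> one_mon \<Longrightarrow> \<exists>i. 0 < g i"
  by (auto simp: one_mon_def)

lemma incseq_subseq_nat:
  fixes s :: "nat \<Rightarrow> nat"
  shows "\<exists>r. strict_mono r \<and> incseq (s \<circ> r)"
proof -
  obtain r :: "nat \<Rightarrow> nat" where r: "strict_mono r" "monoseq (s \<circ> r)"
    using seq_monosub[of s] by (auto simp: comp_def)
  show ?thesis
  proof (cases "incseq (s \<circ> r)")
    case True
    with r show ?thesis by blast
  next
    case False
    with r have dec: "decseq (s \<circ> r)" by (simp add: monoseq_iff)
    obtain N where N: "\<And>n. s (r N) \<le> s (r n)"
      using ex_has_least_nat[of "\<lambda>_. True" 0 "\<lambda>n. s (r n)"] by blast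
    \<comment> \<open>a non-increasing sequence of naturals is constant from its minimum on\<close>
    have const: "s (r (n + N)) = s (r N)" for n
      using N[of "n + N"] decseqD[OF dec, of N "n + N"] by simp
    have "strict_mono (\<lambda>n. r (n + N))"
      using r(1) by (simp add: strict_mono_def)
    moreover have "incseq (s \<circ> (\<lambda>n. r (n + N)))"
      by (simp add: incseq_def const)
    ultimately show ?thesis by blast
  qed
qed

lemma dickson:
  fixes f :: "nat \<Rightarrow> 'v::finite \<Rightarrow> nat"
  shows "\<exists>r. strict_mono r \<and> incseq (f \<circ> r)"
proof -
  have "\<exists>r. strict_mono r \<and> (\<forall>k\<in>D. incseq (\<lambda>n. f (r n) k))" for D :: "'v set"
    using finite[of D]
  proof (induction D rule: finite_induct)
    case empty
    have "strict_mono (id :: nat \<Rightarrow> nat)" by (simp add: strict_mono_def)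
    then show ?case by blast
  next
    case (insert k D)
    then obtain r where r: "strict_mono r" "\<And>k. k \<in> D \<Longrightarrow> incseq (\<lambda>n. f (r n) k)"
      by blast
    obtain r' where r': "strict_mono r'" "incseq ((\<lambda>n. f (r n) k) \<circ> r')"
      using incseq_subseq_nat[of "\<lambda>n. f (r n) k"] by blast
    have "incseq (\<lambda>n. f (r (r' n)) k')" if "k' \<in> insert k D" for k'
    proof (cases "k' = k")
      case True
      with r'(2) show ?thesis by (simp add: comp_def)
    next
      case False
      with that have "incseq (\<lambda>n. f (r n) k')" using r(2) by simp
      then show ?thesis
        using strict_mono_mono[OF r'(1)] by (intro monoI) (meson monoD)
    qed
    moreover have "strict_mono (r \<circ> r')"
      using r(1) r'(1) by (rule strict_mono_o)
    ultimately show ?case by auto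
  qed
  from this[of UNIV] obtain r where r: "strict_mono r" "\<And>k. incseq (\<lambda>n. f (r n) k)"
    by blast
  have "incseq (f \<circ> r)"
  proof (rule monoI)
    fix m n :: nat
    assume "m \<le> n"
    then show "(f \<circ> r) m \<le> (f \<circ> r) n"
      using monoD[OF r(2)] by (simp add: le_fun_def)
  qed
  with r(1) show ?thesis by blast
qed

lemma finite_mingens:
  fixes L :: "('v::finite) monomial set"
  shows "finite (mingens L)"
proof (rule ccontr)
  assume "infinite (mingens L)"
  then obtain f :: "nat \<Rightarrow> 'v monomial" where f: "inj f" "range f \<subseteq> mingens L"
    using infinite_countable_subset by blast
  obtain r :: "nat \<Rightarrow> nat" where r: "strict_mono r" "incseq (f \<circ> r)"
    using dickson by blast
  have "f (r 0) \<le> f (r 1)" "f (r 0) \<in> L" "f (r 1) \<in> mingens L"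
    using r(2) f(2) by (auto simp: incseq_def mingens_def dest!: range_subsetD)
  then have "f (r 0) = f (r 1)"
    by (auto simp: mingens_def mdvd_iff_le)
  with f(1) have "r 0 = r 1" by (simp add: inj_eq)
  with r(1) show False by (simp add: strict_mono_eq)
qed

lemma ex_mingens_mdvd:
  fixes L :: "('v::finite) monomial set"
  assumes "u \<in> L"
  shows "\<exists>g\<in>mingens L. mdvd g u"
proof -
  let ?S = "{g\<in>L. mdvd g u}"
  have "u \<in> ?S" using assms by (simp add: mdvd_def)
  then obtain g where g: "g \<in> ?S" and least: "\<And>h. h \<in> ?S \<Longrightarrow> sum g UNIV \<le> sum h UNIV"
    using ex_has_least_nat[of "\<lambda>g. g \<in> ?S" u "\<lambda>g. sum g UNIV"] by blast
  \<comment> \<open>a proper divisor has a strictly smaller total degree\<close>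
  have "h = g" if "h \<in> L" "mdvd h g" for h
  proof (rule ccontr)
    assume "h \<noteq> g"
    with that(2) have "\<forall>i\<in>UNIV. h i \<le> g i" "\<exists>i\<in>UNIV. h i < g i"
      by (auto simp: mdvd_def fun_eq_iff) (meson le_neq_trans)
    then have "sum h UNIV < sum g UNIV"
      by (intro sum_strict_mono_ex1) simp_all
    moreover have "h \<in> ?S" using that g by (auto simp: mdvd_iff_le)
    ultimately show False using least by fastforce
  qed
  with g show ?thesis by (auto simp: mingens_def)
qed

lemma ex_mingens_times_var_mdvd:
  fixes L :: "('v::finite) monomial set"
  assumes "dstar L \<subseteq> I" "g \<in> mingens L" "0 < g i"
  shows "\<exists>h\<in>mingens I. mdvd (mmult h (var_mon i)) g"
proof -
  define q where "q = (\<lambda>j. g j - (if j = i then 1 else 0))"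
  have q: "mmult q (var_mon i) = g"
    using assms(3) by (auto simp: q_def mmult_var_mon_apply)
  moreover have "mdvd (var_mon i) g"
    using assms(3) by (auto simp: mdvd_def var_mon_def)
  ultimately have "q \<in> dstar L"
    using assms(2) by (auto simp: dstar_def gen_ideal_def mdvd_def)
  with assms(1) obtain h where h: "h \<in> mingens I" "mdvd h q"
    using ex_mingens_mdvd by blast
  then have "mdvd (mmult h (var_mon i)) g"
    using q by (auto simp: mdvd_def mmult_def)
  with h(1) show ?thesis by blast
qed

lemma mdvd_mlcm: "finite G \<Longrightarrow> f \<in> G \<Longrightarrow> mdvd f (mlcm G)"
  by (auto simp: mdvd_def mlcm_def)

lemma mlcm_mdvd:
  "finite G \<Longrightarrow> G \<noteq> {} \<Longrightarrow> (\<And>f. f \<in> G \<Longrightarrow> mdvd f u) \<Longrightarrow> mdvd (mlcm G) u"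
  by (auto simp: mdvd_def mlcm_def)

lemma mlcm_image_mmult:
  "finite G \<Longrightarrow> G \<noteq> {} \<Longrightarrow> mlcm ((\<lambda>g. mmult g u) ` G) = mmult (mlcm G) u"
  by (simp add: mlcm_def mmult_def image_image Max_add_commute)

definition max_var :: "('v \<Rightarrow> 'b::linorder) \<Rightarrow> 'v monomial \<Rightarrow> 'v" where
  "max_var \<nu> f = (ARG_MAX \<nu> i. 0 < f i)"

lemma max_var:
  fixes \<nu> :: "'v::finite \<Rightarrow> 'b::linorder"
  assumes "\<exists>i. 0 < f i"
  shows "0 < f (max_var \<nu> f) \<and> (\<forall>j. 0 < f j \<longrightarrow> \<nu> j \<le> \<nu> (max_var \<nu> f))"
proof -
  let ?S = "{j. 0 < f j}"
  have fin: "finite (\<nu> ` ?S)" using finite by (rule finite_imageI)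
  have ne: "\<nu> ` ?S \<noteq> {}" using assms by simp
  obtain i where i: "i \<in> ?S" "\<nu> i = Max (\<nu> ` ?S)"
    using Max_in[OF fin ne] by (metis imageE)
  have "\<nu> j \<le> \<nu> i" if "0 < f j" for j
    using Max_ge[OF fin] that i(2) by simp
  with i(1) show ?thesis
    unfolding max_var_def
    by (intro arg_maxI[where Q = "\<lambda>m. 0 < f m \<and> (\<forall>j. 0 < f j \<longrightarrow> \<nu> j \<le> \<nu> m)"])
      (auto simp: not_less)
qed

lemma max_var_eqI:
  assumes "inj \<nu>" "0 < f i" "\<And>j. 0 < f j \<Longrightarrow> \<nu> j \<le> \<nu> i"
  shows "max_var \<nu> f = i"
proof -
  have "\<nu> (max_var \<nu> f) = \<nu> i"
    unfolding max_var_def using assms(2,3) by (rule arg_max_equality)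
  with assms(1) show ?thesis by (simp add: inj_eq)
qed

lemma mlcm_times_max_var_mdvd:
  fixes G :: "('v::finite) monomial set" and \<nu> :: "'v \<Rightarrow> 'b::linorder"
  assumes "inj \<nu>" "finite G" "G \<noteq> {}" "one_mon \<notin> G"
    and h: "\<And>f. f \<in> G \<Longrightarrow> mdvd (mmult (h f) (var_mon (max_var \<nu> f))) f"
  shows "mdvd (mmult (mlcm (h ` G)) (var_mon (max_var \<nu> (mlcm G)))) (mlcm G)"
proof -
  define l where "l = mlcm G"
  define j where "j = max_var \<nu> l"
  have f_le_l: "f \<le> l" if "f \<in> G" for f
    using mdvd_mlcm[OF assms(2) that] by (simp add: l_def mdvd_iff_le)
  have "\<exists>i. 0 < l i"
    using assms(3,4) f_le_l ex_pos_if_ne_one_mon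
    by (metis all_not_in_conv le_funD less_le_trans)
  then have j: "0 < l j" "\<And>k. 0 < l k \<Longrightarrow> \<nu> k \<le> \<nu> j"
    using max_var[of l \<nu>] by (auto simp: j_def)
  have "mdvd (mmult (h f) (var_mon j)) l" if f: "f \<in> G" for f
  proof -
    have hf: "mdvd (mmult (h f) (var_mon (max_var \<nu> f))) f" using h[OF f] .
    then have "h f \<le> f"
      by (auto simp: mdvd_def le_fun_def mmult_var_mon_apply) (metis add_leD1)
    consider "f j < l j" | "f j = l j"
      using f_le_l[OF f] by (metis le_funD le_neq_trans)
    then show ?thesis
    proof cases
      case 1
      with \<open>h f \<le> f\<close> f_le_l[OF f] show ?thesis
        by (auto simp: mdvd_def le_fun_def mmult_var_mon_apply intro: le_trans)
          (meson Suc_leI le_less_trans)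
    next
      case 2
      \<comment> \<open>the support of \<open>f\<close> lies in that of \<open>l\<close>, so \<open>x\<^sub>j\<close> is the largest variable of \<open>f\<close> too\<close>
      have "max_var \<nu> f = j"
        using f_le_l[OF f] j 2
        by (intro max_var_eqI[OF assms(1)]) (auto simp: le_fun_def dest: less_le_trans)
      with hf f_le_l[OF f] show ?thesis
        by (auto simp: mdvd_iff_le)
    qed
  qed
  then have "mdvd (mlcm ((\<lambda>g. mmult g (var_mon j)) ` h ` G)) l"
    using assms(2,3) by (intro mlcm_mdvd) auto
  then show ?thesis
    using assms(2,3) by (simp add: mlcm_image_mmult l_def j_def)
qed

theorem proposition4p4:
  fixes I1 I2 :: "('v::finite) monomial set"
  assumes "monomial_ideal I1" and "monomial_ideal I2"
    and "I1 \<noteq> {}" and "I2 \<noteq> {}"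
    and "one_mon \<notin> I1" and "one_mon \<notin> I2"
    and "dstar I1 \<subseteq> I2"
  shows "I1 \<subseteq> max_times I2 \<and>
    (\<exists>\<phi>. (\<forall>f\<in>mingens I1. \<phi> f \<in> mingens I2) \<and>
         (\<forall>G'. G' \<subseteq> mingens I1 \<and> G' \<noteq> {} \<longrightarrow>
               mlcm G' \<in> max_times (gen_ideal {mlcm (\<phi> ` G')})))"
proof -
  obtain \<nu> :: "'v \<Rightarrow> nat" where \<nu>: "inj \<nu>"
    using finite_imp_inj_to_nat_seg[of "UNIV :: 'v set"] by auto
  have "\<exists>h\<in>mingens I2. mdvd (mmult h (var_mon (max_var \<nu> f))) f" if f: "f \<in> mingens I1" for f
  proof (rule ex_mingens_times_var_mdvd[OF assms(7) f])
    have "f \<noteq> one_mon" using f assms(5) by (auto simp: mingens_def)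
    then have "\<exists>i. 0 < f i" by (rule ex_pos_if_ne_one_mon)
    then show "0 < f (max_var \<nu> f)" by (simp add: max_var)
  qed
  then obtain \<phi> where \<phi>: "\<And>f. f \<in> mingens I1 \<Longrightarrow>
      \<phi> f \<in> mingens I2 \<and> mdvd (mmult (\<phi> f) (var_mon (max_var \<nu> f))) f"
    by metis
  have "I1 \<subseteq> max_times I2"
  proof
    fix u assume "u \<in> I1"
    then obtain f where f: "f \<in> mingens I1" "mdvd f u" using ex_mingens_mdvd by blast
    with \<phi> have "mdvd (mmult (\<phi> f) (var_mon (max_var \<nu> f))) u"
      by (meson mdvd_iff_le order_trans)
    moreover have "\<phi> f \<in> I2" using \<phi>[OF f(1)] by (simp add: mingens_def)
    ultimately show "u \<in> max_times I2" by (auto simp: mem_max_times_iff)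
  qed
  moreover have "mlcm G' \<in> max_times (gen_ideal {mlcm (\<phi> ` G')})"
    if G': "G' \<subseteq> mingens I1" "G' \<noteq> {}" for G'
  proof -
    have "finite G'" using finite_subset[OF G'(1) finite_mingens] .
    moreover have "one_mon \<notin> G'" using G'(1) assms(5) by (auto simp: mingens_def)
    ultimately have "mdvd (mmult (mlcm (\<phi> ` G')) (var_mon (max_var \<nu> (mlcm G')))) (mlcm G')"
      using G' \<phi> by (intro mlcm_times_max_var_mdvd[OF \<nu>]) auto
    then show ?thesis by (auto simp: mem_max_times_iff gen_ideal_def mdvd_iff_le)
  qed
  ultimately show ?thesis using \<phi> by blast
qed

end
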